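(* Let $\varphi:[0,\infty)\to\mathbb R$ be completely monotone with $\varphi(0)=1$ and $\lim_{x\to\infty}\varphi(x)=0$, and let $0<p\le1$, $D\ge1$. Then the function $\rho:\mathbb R^D\to\mathbb R$, $\rho(\boldsymbol\omega)=\varphi(\|\boldsymbol\omega\|_p^p)$, is positive definite: for every $k\ge1$, every pairwise distinct $\theta_1,\dots,\theta_k\in\mathbb R^D$ and every $\mathbf c\in\mathbb C^k\setminus\{0\}$, $\sum_{\ell,\ell'=1}^k\overline{\mathbf c[\ell]}\,\mathbf c[\ell']\,\varphi(\|\theta_{\ell'}-\theta_\ell\|_p^p)>0$.
   Context: A function $\varphi:[0,\infty)\to\mathbb R$ is completely monotone (CMF) if it is infinitely differentiable on $(0,\infty)$, right-continuous at $0$, and $(-1)^n\varphi^{(n)}(x)\ge0$ for all $x>0$ and all integers $n\ge0$. $\|\theta\|_p^p=\sum_{d=1}^D|\theta[d]|^p$. *)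

theory Defs
  imports "HOL-Analysis.Analysis" "HOL-Library.Complex_Order"
begin

text \<open>Completely monotone function on [0,\<infinity>): smooth on (0,\<infinity>) (all iterated
  derivatives exist there), right-continuous at 0, and (-1)^n phi^(n)(x) \<ge> 0 for x > 0.
  Values of phi on negative reals are irrelevant.\<close>
definition completely_monotone :: "(real \<Rightarrow> real) \<Rightarrow> bool" where
  "completely_monotone \<phi> \<longleftrightarrow>
     (\<forall>n::nat. \<forall>x>0. ((deriv ^^ n) \<phi>) differentiable (at x)) \<and>
     (\<phi> \<longlongrightarrow> \<phi> 0) (at_right 0) \<and>
     (\<forall>n::nat. \<forall>x>0. (-1) ^ n * (deriv ^^ n) \<phi> x \<ge> 0)"

definition pnorm_pow :: "real \<Rightarrow> real ^ 'n \<Rightarrow> real" where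
  "pnorm_pow p x = (\<Sum>d\<in>UNIV. \<bar>x $ d\<bar> powr p)"

end

(* By Bernstein's theorem phi is a mixture of exponentials e^(-t x), so it would suffice that
   exp (- s * ||w||_p^p) is strictly positive definite for every s > 0. Bernstein's theorem is replaced by
   a finite version: on any finite set, phi is uniformly approximated by nonnegative combinations of
   exponentials (expand phi in Taylor series at a far point A; the coefficients are nonnegative and
   (1 - x/A)^i is close to e^(-i x/A)). Since phi(0) = 1 and phi vanishes at infinity, half of the mass of
   these mixtures sits on rates in a fixed compact subinterval of (0, oo), which turns positivity of all
   the exponential forms into strict positivity of the phi-form.
   The kernel exp (- s * ||w||_p^p) is a product over coordinates. The Laplace kernel exp (- r |t|) is a
   positive combination of orthant indicators, hence strictly positive definite at distinct points, and
   each coordinate factor is converted into exp (- s |t|^p) by the same transfer, because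
   u -> exp (- s * u powr p) is completely monotone for 0 < p <= 1. *)
theory Submission
  imports Defs
begin

section \<open>Taylor expansion of completely monotone functions\<close>

definition signed_deriv :: "(real \<Rightarrow> real) \<Rightarrow> nat \<Rightarrow> real \<Rightarrow> real" where
  "signed_deriv \<phi> n x = (-1) ^ n * (deriv ^^ n) \<phi> x"

(* The Taylor polynomial of order n of phi at A, evaluated at x:
   (A - x)^i * signed_deriv phi i A = (x - A)^i * phi^(i)(A). *)
definition taylor_poly :: "(real \<Rightarrow> real) \<Rightarrow> real \<Rightarrow> nat \<Rightarrow> real \<Rightarrow> real" where
  "taylor_poly \<phi> A n x = (\<Sum>i<n. (A - x) ^ i / fact i * signed_deriv \<phi> i A)"

definition taylor_rem_integrand :: "(real \<Rightarrow> real) \<Rightarrow> real \<Rightarrow> nat \<Rightarrow> real \<Rightarrow> real \<Rightarrow> real" where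
  "taylor_rem_integrand \<phi> A n x t = (A - x - t) ^ (n - 1) / fact (n - 1) * signed_deriv \<phi> n (A - t)"

lemma completely_monotone_signed_deriv_nonneg:
  assumes "completely_monotone \<phi>" "x > 0"
  shows "signed_deriv \<phi> n x \<ge> 0"
  using assms unfolding completely_monotone_def signed_deriv_def by blast

lemma completely_monotone_nonneg:
  assumes "completely_monotone \<phi>" "x \<ge> 0"
  shows "\<phi> x \<ge> 0"
proof -
  have pos: "\<phi> y \<ge> 0" if "y > 0" for y
    using completely_monotone_signed_deriv_nonneg[OF assms(1) that, of 0] by (simp add: signed_deriv_def)
  have "(\<phi> \<longlongrightarrow> \<phi> 0) (at_right 0)"
    using assms(1) unfolding completely_monotone_def by blast
  then have "\<phi> 0 \<ge> 0"
    using pos by (rule tendsto_lowerbound[OF _ eventually_at_rightI[of 0 1]]) auto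
  then show ?thesis
    using pos assms(2) by (cases "x = 0") auto
qed

lemma completely_monotone_signed_deriv_reflect:
  assumes "completely_monotone \<phi>" "A - t > 0"
  shows "((\<lambda>t. signed_deriv \<phi> m (A - t)) has_real_derivative signed_deriv \<phi> (Suc m) (A - t))
           (at t within S)"
proof -
  have "(deriv ^^ m) \<phi> differentiable (at (A - t))"
    using assms unfolding completely_monotone_def by blast
  then have "((deriv ^^ m) \<phi> has_real_derivative (deriv ^^ Suc m) \<phi> (A - t)) (at (A - t))"
    by (simp add: DERIV_deriv_iff_real_differentiable)
  moreover have "((\<lambda>t. A - t) has_real_derivative -1) (at t)"
    by (auto intro!: derivative_eq_intros)
  ultimately have "((\<lambda>t. (deriv ^^ m) \<phi> (A - t)) has_real_derivative - (deriv ^^ Suc m) \<phi> (A - t)) (at t)"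
    using DERIV_chain2 by fastforce
  from DERIV_cmult[OF this, of "(-1) ^ m"] show ?thesis
    unfolding signed_deriv_def by (auto intro: has_field_derivative_at_within)
qed

lemma completely_monotone_taylor_expansion:
  assumes cm: "completely_monotone \<phi>" and "0 < x" "x < A" "n > 0"
  shows "\<phi> x = taylor_poly \<phi> A n x + integral {0..A - x} (taylor_rem_integrand \<phi> A n x)"
    and "taylor_rem_integrand \<phi> A n x integrable_on {0..A - x}"
proof -
  have deriv: "((\<lambda>t. signed_deriv \<phi> m (A - t)) has_vector_derivative signed_deriv \<phi> (Suc m) (A - t))
          (at t within {0..A - x})" if "t \<le> A - x" for m t
    using completely_monotone_signed_deriv_reflect[OF cm] that assms
    by (simp add: has_real_derivative_iff_has_vector_derivative[symmetric])
  have "(\<lambda>m t. signed_deriv \<phi> m (A - t)) 0 = (\<lambda>t. \<phi> (A - t))"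
    by (simp add: signed_deriv_def)
  note taylor = Taylor_integral[OF \<open>n > 0\<close> this deriv] Taylor_integrable[OF \<open>n > 0\<close> this deriv]
  have rem: "(\<lambda>t. ((A - x - t) ^ (n - 1) / fact (n - 1)) *\<^sub>R signed_deriv \<phi> n (A - t))
               = taylor_rem_integrand \<phi> A n x"
    by (auto simp: taylor_rem_integrand_def)
  show "\<phi> x = taylor_poly \<phi> A n x + integral {0..A - x} (taylor_rem_integrand \<phi> A n x)"
    using taylor(1) assms unfolding rem by (simp add: taylor_poly_def)
  show "taylor_rem_integrand \<phi> A n x integrable_on {0..A - x}"
    using taylor(2) assms unfolding rem by simp
qed

lemma taylor_rem_integrand_nonneg:
  assumes "completely_monotone \<phi>" "0 \<le> t" "t \<le> A - x" "0 < x"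
  shows "taylor_rem_integrand \<phi> A n x t \<ge> 0"
  unfolding taylor_rem_integrand_def
  using assms completely_monotone_signed_deriv_nonneg[OF assms(1), of "A - t" n] by auto

lemma completely_monotone_taylor_poly_le:
  assumes cm: "completely_monotone \<phi>" and "0 < x" "x < A" "n > 0"
  shows "taylor_poly \<phi> A n x \<le> \<phi> x"
proof -
  have "0 \<le> integral {0..A - x} (taylor_rem_integrand \<phi> A n x)"
    using completely_monotone_taylor_expansion(2)[OF assms] taylor_rem_integrand_nonneg[OF cm] assms
    by (intro integral_nonneg) auto
  then show ?thesis using completely_monotone_taylor_expansion(1)[OF assms] by simp
qed

lemma completely_monotone_taylor_poly_nonneg:
  assumes "completely_monotone \<phi>" "x \<le> A" "0 < A"
  shows "taylor_poly \<phi> A n x \<ge> 0"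
  unfolding taylor_poly_def using assms completely_monotone_signed_deriv_nonneg[OF assms(1), of A]
  by (auto intro!: sum_nonneg)

lemma completely_monotone_taylor_remainder_le:
  assumes cm: "completely_monotone \<phi>" and "0 < y" "y < x" "x < A" "n > 0"
  shows "\<phi> x - taylor_poly \<phi> A n x \<le> ((A - x) / (A - y)) ^ (n - 1) * (\<phi> y - taylor_poly \<phi> A n y)"
proof -
  define r where "r = ((A - x) / (A - y)) ^ (n - 1)"
  have "0 < x" "y < A" using assms by auto
  note taylor_x = completely_monotone_taylor_expansion[OF cm \<open>0 < x\<close> \<open>x < A\<close> \<open>n > 0\<close>]
  note taylor_y = completely_monotone_taylor_expansion[OF cm \<open>0 < y\<close> \<open>y < A\<close> \<open>n > 0\<close>]
  have int_y: "taylor_rem_integrand \<phi> A n y integrable_on {0..A - x}"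
    by (rule integrable_on_subinterval[OF taylor_y(2)]) (use assms in auto)
  have pointwise: "taylor_rem_integrand \<phi> A n x t \<le> r * taylor_rem_integrand \<phi> A n y t" if "t \<in> {0..A - x}" for t
  proof -
    have "t * (A - x) \<le> t * (A - y)" using that assms by (intro mult_left_mono) auto
    then have "A - x - t \<le> (A - x) / (A - y) * (A - y - t)"
      using assms by (simp add: field_simps)
    then have "(A - x - t) ^ (n - 1) \<le> ((A - x) / (A - y) * (A - y - t)) ^ (n - 1)"
      using that by (intro power_mono) auto
    also have "\<dots> = r * (A - y - t) ^ (n - 1)"
      by (simp only: r_def power_mult_distrib)
    finally have "(A - x - t) ^ (n - 1) \<le> r * (A - y - t) ^ (n - 1)" .
    moreover have "signed_deriv \<phi> n (A - t) \<ge> 0"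
      using completely_monotone_signed_deriv_nonneg[OF cm] that assms by auto
    ultimately have "(A - x - t) ^ (n - 1) * signed_deriv \<phi> n (A - t)
                       \<le> r * ((A - y - t) ^ (n - 1) * signed_deriv \<phi> n (A - t))"
      by (metis mult.assoc mult_right_mono)
    from divide_right_mono[OF this, of "fact (n - 1)"] show ?thesis
      unfolding taylor_rem_integrand_def by (simp add: field_simps)
  qed
  have "\<phi> x - taylor_poly \<phi> A n x = integral {0..A - x} (taylor_rem_integrand \<phi> A n x)"
    using taylor_x(1) by simp
  also have "\<dots> \<le> integral {0..A - x} (\<lambda>t. r * taylor_rem_integrand \<phi> A n y t)"
    using taylor_x(2) integrable_cmul[OF int_y, of r] pointwise by (intro integral_le) auto
  also have "\<dots> = r * integral {0..A - x} (taylor_rem_integrand \<phi> A n y)" by simp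
  also have "\<dots> \<le> r * integral {0..A - y} (taylor_rem_integrand \<phi> A n y)"
    using assms int_y taylor_y(2) taylor_rem_integrand_nonneg[OF cm]
    by (intro mult_left_mono integral_subset_le) (auto simp: r_def)
  also have "\<dots> = r * (\<phi> y - taylor_poly \<phi> A n y)"
    using taylor_y(1) by simp
  finally show ?thesis unfolding r_def .
qed

lemma completely_monotone_taylor_poly_tendsto:
  assumes cm: "completely_monotone \<phi>" and "0 < x" "x < A"
  shows "(\<lambda>n. taylor_poly \<phi> A n x) \<longlonglongrightarrow> \<phi> x"
proof -
  define r where "r = (A - x) / (A - x / 2)"
  have "0 < A - x" "A - x < A - x / 2" using assms by auto
  then have r: "0 \<le> r" "r < 1" unfolding r_def by (auto simp: divide_less_eq_1)
  then have "(\<lambda>n. r ^ n) \<longlonglongrightarrow> 0" by (intro LIMSEQ_power_zero) auto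
  then have "(\<lambda>n. r ^ (n - 1)) \<longlonglongrightarrow> 0"
    using LIMSEQ_offset[of "\<lambda>n. r ^ (n - 1)" 1] by simp
  then have bound_lim: "(\<lambda>n. r ^ (n - 1) * \<phi> (x / 2)) \<longlonglongrightarrow> 0"
    by (rule tendsto_mult_left_zero)
  have lower: "\<forall>\<^sub>F n in sequentially. 0 \<le> \<phi> x - taylor_poly \<phi> A n x"
    using eventually_gt_at_top[of 0] by eventually_elim (simp add: completely_monotone_taylor_poly_le[OF assms])
  have upper: "\<forall>\<^sub>F n in sequentially. \<phi> x - taylor_poly \<phi> A n x \<le> r ^ (n - 1) * \<phi> (x / 2)"
    using eventually_gt_at_top[of 0]
  proof eventually_elim
    case (elim n)
    have "\<phi> x - taylor_poly \<phi> A n x \<le> r ^ (n - 1) * (\<phi> (x / 2) - taylor_poly \<phi> A n (x / 2))"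
      using completely_monotone_taylor_remainder_le[OF cm, of "x / 2" x A n] assms elim by (simp add: r_def)
    also have "\<dots> \<le> r ^ (n - 1) * \<phi> (x / 2)"
      using completely_monotone_taylor_poly_nonneg[OF cm, of "x / 2" A n] assms r by (intro mult_left_mono) auto
    finally show ?case .
  qed
  have "(\<lambda>n. \<phi> x - taylor_poly \<phi> A n x) \<longlonglongrightarrow> 0"
    by (rule tendsto_sandwich[OF lower upper tendsto_const bound_lim])
  from tendsto_diff[OF tendsto_const this, of "\<phi> x"] show ?thesis by simp
qed

section \<open>Approximation by mixtures of exponentials\<close>

lemma one_minus_pow_le_exp:
  fixes y :: real
  assumes "0 \<le> y" "y \<le> 1"
  shows "(1 - y) ^ k \<le> exp (- (real k * y))"
proof -
  have "(1 - y) ^ k \<le> exp (- y) ^ k"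
    using assms exp_ge_add_one_self[of "- y"] by (intro power_mono) auto
  then show ?thesis by (simp add: exp_of_nat_mult[symmetric])
qed

lemma exp_minus_one_minus_pow_le:
  fixes y :: real
  assumes "0 \<le> y" "y \<le> 1"
  shows "exp (- (real k * y)) - (1 - y) ^ k \<le> y"
proof (cases k)
  case 0
  then show ?thesis using assms by simp
next
  case (Suc j)
  define b where "b = 1 - y"
  define c where "c = exp (- y)"
  have bc: "0 \<le> b" "b \<le> c" "c \<le> 1"
    using assms exp_ge_add_one_self[of "- y"] by (auto simp: b_def c_def)
  have "c ^ k - b ^ k = (c - b) * (\<Sum>i<k. b ^ (k - Suc i) * c ^ i)"
    by (rule power_diff_sumr2)
  also have "\<dots> \<le> (c - b) * (\<Sum>i<k. c ^ j)"
  proof (intro mult_left_mono sum_mono)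
    fix i assume "i \<in> {..<k}"
    then have "b ^ (k - Suc i) * c ^ i \<le> c ^ (k - Suc i) * c ^ i"
      using bc by (intro mult_right_mono power_mono) auto
    also have "\<dots> = c ^ j" using \<open>i \<in> {..<k}\<close> Suc by (simp add: power_add[symmetric])
    finally show "b ^ (k - Suc i) * c ^ i \<le> c ^ j" .
  qed (use bc in auto)
  also have "\<dots> \<le> y\<^sup>2 * (real k * c ^ j)"
  proof -
    have "c \<le> 1 / (1 + y)"
      using exp_ge_add_one_self[of y] assms by (simp add: c_def exp_minus field_simps)
    also have "\<dots> \<le> 1 - y + y\<^sup>2" using assms by (simp add: field_simps power2_eq_square)
    finally have "c - b \<le> y\<^sup>2" by (simp add: b_def)
    then show ?thesis using bc by (simp add: mult_right_mono)
  qed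
  also have "\<dots> \<le> y\<^sup>2 * (1 / y)"
  proof (cases "y = 0")
    case False
    have "real k * y \<le> exp (real k * y - 1)" using exp_ge_add_one_self[of "real k * y - 1"] by simp
    also have "\<dots> \<le> exp (real j * y)" using assms Suc by (simp add: algebra_simps)
    finally have "real k * y * c ^ j \<le> exp (real j * y) * exp (- (real j * y))"
      by (simp add: c_def exp_of_nat_mult[symmetric] mult_right_mono)
    then show ?thesis using False assms by (simp add: exp_minus field_simps power2_eq_square)
  qed simp
  finally show ?thesis
    using assms by (simp add: b_def c_def exp_of_nat_mult[symmetric] power2_eq_square)
qed

definition taylor_weight :: "(real \<Rightarrow> real) \<Rightarrow> real \<Rightarrow> nat \<Rightarrow> real" where
  "taylor_weight \<phi> A i = A ^ i / fact i * signed_deriv \<phi> i A"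

lemma completely_monotone_taylor_weight_nonneg:
  assumes "completely_monotone \<phi>" "A > 0"
  shows "taylor_weight \<phi> A i \<ge> 0"
  unfolding taylor_weight_def using completely_monotone_signed_deriv_nonneg[OF assms] assms(2) by simp

lemma taylor_poly_eq_sum_pow:
  assumes "A > 0"
  shows "taylor_poly \<phi> A n x = (\<Sum>i<n. taylor_weight \<phi> A i * (1 - x / A) ^ i)"
  unfolding taylor_poly_def taylor_weight_def
proof (intro sum.cong refl)
  fix i
  have "(A - x) ^ i = A ^ i * (1 - x / A) ^ i"
    using assms by (simp add: power_mult_distrib[symmetric] field_simps)
  then show "(A - x) ^ i / fact i * signed_deriv \<phi> i A = A ^ i / fact i * signed_deriv \<phi> i A * (1 - x / A) ^ i"
    by simp
qed

lemma completely_monotone_taylor_poly_zero_le: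
  assumes cm: "completely_monotone \<phi>" and "A > 0" "n > 0"
  shows "taylor_poly \<phi> A n 0 \<le> \<phi> 0"
proof (rule tendsto_le[OF _ _ _ eventually_at_rightI[of 0 A]])
  show "(\<phi> \<longlongrightarrow> \<phi> 0) (at_right 0)"
    using cm unfolding completely_monotone_def by blast
  show "((\<lambda>x. taylor_poly \<phi> A n x) \<longlongrightarrow> taylor_poly \<phi> A n 0) (at_right 0)"
    unfolding taylor_poly_def by (intro tendsto_intros) auto
  show "taylor_poly \<phi> A n x \<le> \<phi> x" if "x \<in> {0<..<A}" for x
    using completely_monotone_taylor_poly_le[OF cm] that assms by auto
qed (use assms in auto)

lemma pow_sum_exp_sum_bounds:
  fixes a :: "nat \<Rightarrow> real"
  assumes "\<And>i. a i \<ge> 0" "0 \<le> x" "x \<le> A"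
  shows "(\<Sum>i<n. a i * (1 - x / A) ^ i) \<le> (\<Sum>i<n. a i * exp (- (real i / A) * x))"
    and "(\<Sum>i<n. a i * exp (- (real i / A) * x)) - (\<Sum>i<n. a i * (1 - x / A) ^ i)
           \<le> (\<Sum>i<n. a i) * (x / A)"
proof -
  have y: "0 \<le> x / A" "x / A \<le> 1" using assms by (auto simp: divide_le_eq_1)
  have exp_eq: "exp (- (real i / A) * x) = exp (- (real i * (x / A)))" for i by simp
  show "(\<Sum>i<n. a i * (1 - x / A) ^ i) \<le> (\<Sum>i<n. a i * exp (- (real i / A) * x))"
    unfolding exp_eq using one_minus_pow_le_exp[OF y] assms
    by (intro sum_mono mult_left_mono) auto
  have "(\<Sum>i<n. a i * exp (- (real i * (x / A)))) - (\<Sum>i<n. a i * (1 - x / A) ^ i)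
          = (\<Sum>i<n. a i * (exp (- (real i * (x / A))) - (1 - x / A) ^ i))"
    by (simp add: sum_subtractf algebra_simps)
  also have "\<dots> \<le> (\<Sum>i<n. a i * (x / A))"
    using exp_minus_one_minus_pow_le[OF y] assms by (intro sum_mono mult_left_mono) auto
  also have "\<dots> = (\<Sum>i<n. a i) * (x / A)"
    by (rule sum_distrib_right[symmetric])
  finally show "(\<Sum>i<n. a i * exp (- (real i / A) * x)) - (\<Sum>i<n. a i * (1 - x / A) ^ i)
                  \<le> (\<Sum>i<n. a i) * (x / A)"
    unfolding exp_eq .
qed

lemma completely_monotone_taylor_weight_sum_le:
  assumes "completely_monotone \<phi>" "A > 0" "n > 0"
  shows "(\<Sum>i<n. taylor_weight \<phi> A i) \<le> \<phi> 0"
  using completely_monotone_taylor_poly_zero_le[OF assms] assms(2) by (simp add: taylor_poly_eq_sum_pow)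

lemma completely_monotone_exp_sum_error:
  assumes cm: "completely_monotone \<phi>" and "0 < x" "x < A" "n > 0"
  shows "\<bar>\<phi> x - (\<Sum>i<n. taylor_weight \<phi> A i * exp (- (real i / A) * x))\<bar>
           \<le> (\<phi> x - taylor_poly \<phi> A n x) + \<phi> 0 * (x / A)"
proof -
  have "A > 0" using assms by simp
  note weight_nonneg = completely_monotone_taylor_weight_nonneg[OF cm \<open>A > 0\<close>]
  have "0 \<le> x" "x \<le> A" using assms by auto
  note bounds = pow_sum_exp_sum_bounds[of "taylor_weight \<phi> A", OF weight_nonneg this, of n]
  have "(\<Sum>i<n. taylor_weight \<phi> A i) * (x / A) \<le> \<phi> 0 * (x / A)"
    using completely_monotone_taylor_weight_sum_le[OF cm \<open>A > 0\<close> \<open>n > 0\<close>] assms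
    by (intro mult_right_mono) auto
  then show ?thesis
    using bounds completely_monotone_taylor_poly_le[OF assms]
    unfolding taylor_poly_eq_sum_pow[OF \<open>A > 0\<close>] abs_le_iff by linarith
qed

lemma completely_monotone_exp_sum_error_zero:
  assumes cm: "completely_monotone \<phi>" and "0 < x0" "x0 < A" "n > 0"
  shows "\<bar>\<phi> 0 - (\<Sum>i<n. taylor_weight \<phi> A i)\<bar> \<le> (\<phi> 0 - \<phi> x0) + (\<phi> x0 - taylor_poly \<phi> A n x0)"
proof -
  have "A > 0" using assms by simp
  have "taylor_poly \<phi> A n x0 \<le> (\<Sum>i<n. taylor_weight \<phi> A i)"
    unfolding taylor_poly_eq_sum_pow[OF \<open>A > 0\<close>] using completely_monotone_taylor_weight_nonneg[OF cm \<open>A > 0\<close>] assms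
    by (intro sum_mono mult_left_le power_le_one) auto
  then show ?thesis
    using completely_monotone_taylor_weight_sum_le[OF cm \<open>A > 0\<close> \<open>n > 0\<close>] by (simp add: abs_le_iff)
qed

lemma finite_set_far_scale:
  fixes P :: "real set"
  assumes "finite P" "e > 0" "c \<ge> 0"
  obtains A where "A > 0" "\<And>x. x \<in> P \<Longrightarrow> x < A \<and> c * (x / A) \<le> e"
proof -
  define U where "U = Max (insert 1 P)"
  define A where "A = U * (2 + c / e)"
  have "U \<ge> 1" "\<And>x. x \<in> P \<Longrightarrow> x \<le> U" using assms(1) by (auto simp: U_def)
  have "c / e \<ge> 0" using assms(2,3) by simp
  then have "U * 1 < U * (2 + c / e)" using \<open>U \<ge> 1\<close> by (intro mult_strict_left_mono) auto
  then have "A > U" by (simp add: A_def)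
  have "c \<le> e * (2 + c / e)" "2 + c / e > 0"
    using assms(2,3) \<open>c / e \<ge> 0\<close> by (auto simp: algebra_simps add_pos_nonneg)
  then have "c * (U / A) \<le> e"
    using \<open>U \<ge> 1\<close> by (simp add: A_def pos_divide_le_eq)
  moreover have "c * (x / A) \<le> c * (U / A)" if "x \<in> P" for x
    using \<open>x \<in> P \<Longrightarrow> x \<le> U\<close> that \<open>A > U\<close> \<open>U \<ge> 1\<close> assms(3)
    by (intro mult_left_mono divide_right_mono) auto
  ultimately show ?thesis
  proof (intro that conjI)
    show "A > 0" using \<open>A > U\<close> \<open>U \<ge> 1\<close> by simp
    show "x < A" if "x \<in> P" for x
      using \<open>x \<in> P \<Longrightarrow> x \<le> U\<close>[OF that] \<open>A > U\<close> by simp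
  qed (meson order_trans)
qed

lemma completely_monotone_exp_sum_approx:
  assumes cm: "completely_monotone \<phi>" and "finite P" "\<forall>x\<in>P. 0 \<le> x" "\<eta> > 0"
  obtains n and a t :: "nat \<Rightarrow> real"
  where "\<forall>i. 0 \<le> a i \<and> 0 \<le> t i"
    and "\<forall>x\<in>P. \<bar>\<phi> x - (\<Sum>i<n. a i * exp (- t i * x))\<bar> \<le> \<eta>"
proof -
  define e where "e = \<eta> / 2"
  have "e > 0" using \<open>\<eta> > 0\<close> by (simp add: e_def)
  have "(\<phi> \<longlongrightarrow> \<phi> 0) (at_right 0)"
    using cm unfolding completely_monotone_def by blast
  then have "\<forall>\<^sub>F x in at_right 0. \<phi> x > \<phi> 0 - e"
    using \<open>e > 0\<close> by (simp add: order_tendstoD(1))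
  with eventually_at_right_less[of 0] have "\<forall>\<^sub>F x in at_right 0. 0 < x \<and> \<phi> 0 - \<phi> x < e"
    by eventually_elim auto
  then obtain x0 where "x0 > 0" "\<phi> 0 - \<phi> x0 < e"
    using eventually_happens'[OF trivial_limit_at_right_real] by blast
  define P' where "P' = insert x0 (P - {0})"
  have P'_pos: "x > 0" if "x \<in> P'" for x
    using that assms(3) \<open>x0 > 0\<close> by (force simp: P'_def)
  have "finite P'" using \<open>finite P\<close> by (simp add: P'_def)
  obtain A where "A > 0" and far: "\<And>x. x \<in> P' \<Longrightarrow> x < A \<and> \<phi> 0 * (x / A) \<le> e"
    using finite_set_far_scale[OF \<open>finite P'\<close> \<open>e > 0\<close> completely_monotone_nonneg[OF cm order_refl]] by blast
  have "\<forall>\<^sub>F n in sequentially. \<bar>taylor_poly \<phi> A n x - \<phi> x\<bar> < e" if "x \<in> P'" for x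
    using tendsto_iff[THEN iffD1, OF completely_monotone_taylor_poly_tendsto[OF cm], of x A]
      P'_pos[OF that] far[OF that] \<open>e > 0\<close>
    by (simp add: dist_real_def)
  then have "\<forall>\<^sub>F n in sequentially. n > 0 \<and> (\<forall>x\<in>P'. \<bar>taylor_poly \<phi> A n x - \<phi> x\<bar> < e)"
    using \<open>finite P'\<close> by (intro eventually_conj eventually_gt_at_top eventually_ball_finite) auto
  then obtain n where "n > 0" and taylor_close: "\<forall>x\<in>P'. \<bar>taylor_poly \<phi> A n x - \<phi> x\<bar> < e"
    unfolding eventually_sequentially by blast
  have "\<bar>\<phi> x - (\<Sum>i<n. taylor_weight \<phi> A i * exp (- (real i / A) * x))\<bar> \<le> \<eta>" if "x \<in> P" for x
  proof (cases "x = 0")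
    case True
    have "x0 \<in> P'" by (simp add: P'_def)
    then have "\<phi> x0 - taylor_poly \<phi> A n x0 < e" "x0 < A"
      using taylor_close far by (auto simp: abs_less_iff)
    with completely_monotone_exp_sum_error_zero[OF cm \<open>x0 > 0\<close> _ \<open>n > 0\<close>, of A]
    have "\<bar>\<phi> 0 - (\<Sum>i<n. taylor_weight \<phi> A i)\<bar> \<le> \<eta>"
      using \<open>\<phi> 0 - \<phi> x0 < e\<close> e_def by linarith
    then show ?thesis using True by simp
  next
    case False
    then have "x \<in> P'" using that by (simp add: P'_def)
    then have "\<phi> x - taylor_poly \<phi> A n x < e" "x < A" "\<phi> 0 * (x / A) \<le> e"
      using taylor_close far by (auto simp: abs_less_iff)
    with completely_monotone_exp_sum_error[OF cm P'_pos[OF \<open>x \<in> P'\<close>] _ \<open>n > 0\<close>, of A]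
    show ?thesis using e_def by linarith
  qed
  moreover have "\<forall>i. 0 \<le> taylor_weight \<phi> A i \<and> 0 \<le> real i / A"
    using completely_monotone_taylor_weight_nonneg[OF cm \<open>A > 0\<close>] \<open>A > 0\<close> by simp
  ultimately show ?thesis
    using that[of "taylor_weight \<phi> A" "\<lambda>i. real i / A" n] by blast
qed

lemma exp_mixture_middle_mass:
  fixes a t :: "nat \<Rightarrow> real" and n :: nat
  assumes "\<And>i. a i \<ge> 0" "\<And>i. t i \<ge> 0" "x1 > 0" "x2 > 0"
  defines "E x \<equiv> (\<Sum>i<n. a i * exp (- t i * x))"
  assumes "E 0 \<le> 41 / 40" "E x1 \<le> 3 / 40" "E x2 \<ge> 37 / 40"
  shows "(\<Sum>i<n. a i * of_bool (1 / x1 \<le> t i \<and> t i \<le> 1 / x2)) \<ge> 1 / 2"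
proof -
  have "1 \<le> of_bool (1 / x1 \<le> t i \<and> t i \<le> 1 / x2) + 3 * exp (- t i * x1) + 2 * (1 - exp (- t i * x2))"
    for i
  proof -
    define e1 where "e1 = exp (- t i * x1)"
    define e2 where "e2 = exp (- t i * x2)"
    have "exp (-1) \<ge> (1 / 3 :: real)" "exp (-1) \<le> (1 / 2 :: real)"
      using exp_le exp_ge_add_one_self[of 1] by (simp_all add: exp_minus field_simps)
    moreover have "t i < 1 / x1 \<Longrightarrow> exp (-1) \<le> e1" "t i > 1 / x2 \<Longrightarrow> e2 \<le> exp (-1)"
      using assms by (simp_all add: e1_def e2_def field_simps)
    moreover have "0 \<le> e1" "e2 \<le> 1"
      using assms by (simp_all add: e1_def e2_def)
    ultimately have "1 \<le> of_bool (1 / x1 \<le> t i \<and> t i \<le> 1 / x2) + 3 * e1 + 2 * (1 - e2)"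
      by (cases "t i < 1 / x1"; cases "t i > 1 / x2") auto
    then show ?thesis by (simp add: e1_def e2_def)
  qed
  from mult_left_mono[OF this assms(1)]
  have "E 0 \<le> (\<Sum>i<n. a i * of_bool (1 / x1 \<le> t i \<and> t i \<le> 1 / x2)
           + 3 * (a i * exp (- t i * x1)) + 2 * (a i - a i * exp (- t i * x2)))"
    unfolding E_def by (intro sum_mono) (simp add: algebra_simps)
  also have "\<dots> = (\<Sum>i<n. a i * of_bool (1 / x1 \<le> t i \<and> t i \<le> 1 / x2)) + 3 * E x1 + 2 * (E 0 - E x2)"
    by (simp add: E_def sum.distrib sum_distrib_left sum_subtractf)
  finally show ?thesis
    using assms(6-8) by argo
qed

lemma exp_sum_nonneg:
  fixes W u :: "'j \<Rightarrow> real"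
  assumes "\<forall>s>0. (\<Sum>j\<in>J. W j * exp (- s * u j)) > 0" "s \<ge> 0"
  shows "(\<Sum>j\<in>J. W j * exp (- s * u j)) \<ge> 0"
proof (cases "s = 0")
  case True
  have "((\<lambda>s. \<Sum>j\<in>J. W j * exp (- s * u j)) \<longlongrightarrow> (\<Sum>j\<in>J. W j * exp (- 0 * u j))) (at_right 0)"
    by (intro tendsto_intros)
  moreover have "\<forall>\<^sub>F s in at_right 0. (\<Sum>j\<in>J. W j * exp (- s * u j)) \<ge> 0"
    using assms(1) by (auto simp: eventually_at_right_field intro!: exI[of _ 1] less_imp_le)
  ultimately show ?thesis
    using True by (simp add: tendsto_lowerbound)
qed (use assms in \<open>auto simp: less_imp_le\<close>)

lemma exp_sum_bounded_below:
  fixes W u :: "'j \<Rightarrow> real"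
  assumes "\<forall>s>0. (\<Sum>j\<in>J. W j * exp (- s * u j)) > 0" "b1 > 0"
  obtains \<delta> where "\<delta> > 0" "\<And>s. b1 \<le> s \<Longrightarrow> s \<le> b2 \<Longrightarrow> (\<Sum>j\<in>J. W j * exp (- s * u j)) \<ge> \<delta>"
proof (cases "{b1..b2} = {}")
  case False
  have "continuous_on {b1..b2} (\<lambda>s. \<Sum>j\<in>J. W j * exp (- s * u j))"
    by (intro continuous_intros)
  from continuous_attains_inf[OF compact_Icc False this]
  obtain s0 where "s0 \<in> {b1..b2}" "\<And>s. s \<in> {b1..b2} \<Longrightarrow> (\<Sum>j\<in>J. W j * exp (- s0 * u j)) \<le> (\<Sum>j\<in>J. W j * exp (- s * u j))"
    by blast
  moreover have "(\<Sum>j\<in>J. W j * exp (- s0 * u j)) > 0"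
    using assms \<open>s0 \<in> {b1..b2}\<close> by simp
  ultimately show ?thesis using that by auto
qed (use that[of 1] in auto)

lemma weighted_sum_perturbation_le:
  fixes W f g :: "'j \<Rightarrow> real"
  assumes "\<And>j. j \<in> J \<Longrightarrow> \<bar>g j - f j\<bar> \<le> \<eta>"
  shows "(\<Sum>j\<in>J. W j * f j) \<le> (\<Sum>j\<in>J. W j * g j) + \<eta> * (\<Sum>j\<in>J. \<bar>W j\<bar>)"
proof -
  have "W j * (f j - g j) \<le> \<bar>W j\<bar> * \<eta>" if "j \<in> J" for j
  proof -
    have "\<bar>W j * (f j - g j)\<bar> \<le> \<bar>W j\<bar> * \<eta>"
      unfolding abs_mult using assms[OF that] by (intro mult_left_mono) (simp_all add: abs_minus_commute)
    then show ?thesis by linarith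
  qed
  then have "(\<Sum>j\<in>J. W j * (f j - g j)) \<le> (\<Sum>j\<in>J. \<bar>W j\<bar> * \<eta>)"
    by (rule sum_mono)
  then show ?thesis
    by (simp add: sum_distrib_left algebra_simps sum_subtractf)
qed

lemma completely_monotone_level_points:
  assumes "completely_monotone \<phi>" "\<phi> 0 = 1" "(\<phi> \<longlongrightarrow> 0) at_top"
  obtains x1 x2 where "x1 > 0" "\<phi> x1 \<le> 1 / 20" "x2 > 0" "\<phi> x2 \<ge> 19 / 20"
proof -
  have "\<forall>\<^sub>F x in at_top. \<phi> x < 1 / 20"
    using order_tendstoD(2)[OF assms(3), of "1 / 20"] by simp
  with eventually_gt_at_top[of 0] have "\<forall>\<^sub>F x in at_top. 0 < x \<and> \<phi> x < 1 / 20"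
    by eventually_elim auto
  then obtain x1 where "0 < x1" "\<phi> x1 < 1 / 20"
    using eventually_happens'[OF trivial_limit_at_top_linorder] by blast
  have "(\<phi> \<longlongrightarrow> 1) (at_right 0)"
    using assms(1,2) unfolding completely_monotone_def by simp
  then have "\<forall>\<^sub>F x in at_right 0. \<phi> x > 19 / 20"
    using order_tendstoD(1)[of \<phi> 1 "at_right 0" "19 / 20"] by simp
  with eventually_at_right_less[of 0] have "\<forall>\<^sub>F x in at_right 0. 0 < x \<and> \<phi> x > 19 / 20"
    by eventually_elim auto
  then obtain x2 where "0 < x2" "\<phi> x2 > 19 / 20"
    using eventually_happens'[OF trivial_limit_at_right_real] by blast
  show ?thesis using that \<open>0 < x1\<close> \<open>\<phi> x1 < 1 / 20\<close> \<open>0 < x2\<close> \<open>\<phi> x2 > 19 / 20\<close> by simp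
qed

text \<open>The approximating mixtures \<Sum> a i e^(- t i x) of phi put at least half of their mass on rates
  t i in a fixed compact subinterval of (0, \<infinity>), where the exponential sums are bounded below.\<close>
lemma completely_monotone_sum_pos:
  fixes \<phi> :: "real \<Rightarrow> real" and W u :: "'j \<Rightarrow> real"
  assumes cm: "completely_monotone \<phi>" and "\<phi> 0 = 1" and "(\<phi> \<longlongrightarrow> 0) at_top"
    and "finite J" and u_nonneg: "\<forall>j\<in>J. u j \<ge> 0"
    and exp_pos: "\<forall>s>0. (\<Sum>j\<in>J. W j * exp (- s * u j)) > 0"
  shows "(\<Sum>j\<in>J. W j * \<phi> (u j)) > 0"
proof -
  define g where "g s = (\<Sum>j\<in>J. W j * exp (- s * u j))" for s
  obtain x1 x2 where "x1 > 0" "\<phi> x1 \<le> 1 / 20" "x2 > 0" "\<phi> x2 \<ge> 19 / 20"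
    using completely_monotone_level_points[OF assms(1-3)] .
  obtain \<delta> where "\<delta> > 0" and g_ge: "\<And>s. 1 / x1 \<le> s \<Longrightarrow> s \<le> 1 / x2 \<Longrightarrow> g s \<ge> \<delta>"
    using exp_sum_bounded_below[OF exp_pos, of "1 / x1" "1 / x2"] \<open>x1 > 0\<close> unfolding g_def by auto
  define M where "M = (\<Sum>j\<in>J. \<bar>W j\<bar>)"
  define \<eta> where "\<eta> = min (1 / 40) (\<delta> / (4 * (M + 1)))"
  have "M \<ge> 0" by (simp add: M_def sum_nonneg)
  then have "\<eta> > 0" "\<eta> \<le> 1 / 40" "\<eta> * M \<le> \<delta> / 4"
    using \<open>\<delta> > 0\<close> by (auto simp: \<eta>_def min_def field_simps)
  obtain n and a t :: "nat \<Rightarrow> real" where at_nonneg: "\<forall>i. 0 \<le> a i \<and> 0 \<le> t i"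
    and approx: "\<forall>x\<in>{0, x1, x2} \<union> u ` J. \<bar>\<phi> x - (\<Sum>i<n. a i * exp (- t i * x))\<bar> \<le> \<eta>"
    by (rule completely_monotone_exp_sum_approx[OF cm, of "{0, x1, x2} \<union> u ` J" \<eta>])
       (use \<open>finite J\<close> u_nonneg \<open>x1 > 0\<close> \<open>x2 > 0\<close> \<open>\<eta> > 0\<close> in auto)
  define E where "E x = (\<Sum>i<n. a i * exp (- t i * x))" for x
  have "\<bar>1 - E 0\<bar> \<le> \<eta>" "\<bar>\<phi> x1 - E x1\<bar> \<le> \<eta>" "\<bar>\<phi> x2 - E x2\<bar> \<le> \<eta>"
    using approx \<open>\<phi> 0 = 1\<close> unfolding E_def by auto
  then have mid: "(\<Sum>i<n. a i * of_bool (1 / x1 \<le> t i \<and> t i \<le> 1 / x2)) \<ge> 1 / 2"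
    using at_nonneg \<open>x1 > 0\<close> \<open>x2 > 0\<close> \<open>\<phi> x1 \<le> 1 / 20\<close> \<open>\<phi> x2 \<ge> 19 / 20\<close> \<open>\<eta> \<le> 1 / 40\<close>
    by (intro exp_mixture_middle_mass) (auto simp: E_def abs_le_iff)
  have "\<delta> / 2 \<le> \<delta> * (\<Sum>i<n. a i * of_bool (1 / x1 \<le> t i \<and> t i \<le> 1 / x2))"
    using mult_left_mono[OF mid, of \<delta>] \<open>\<delta> > 0\<close> by simp
  also have "\<dots> = (\<Sum>i<n. a i * (\<delta> * of_bool (1 / x1 \<le> t i \<and> t i \<le> 1 / x2)))"
    by (simp only: sum_distrib_left mult.left_commute)
  also have "\<dots> \<le> (\<Sum>i<n. a i * g (t i))"
    using at_nonneg g_ge exp_sum_nonneg[OF exp_pos] unfolding g_def[symmetric]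
    by (intro sum_mono mult_left_mono) auto
  also have "\<dots> = (\<Sum>j\<in>J. W j * E (u j))"
    unfolding g_def E_def by (simp add: sum_distrib_left sum_distrib_right mult_ac sum.swap[of _ J])
  also have "\<dots> \<le> (\<Sum>j\<in>J. W j * \<phi> (u j)) + \<eta> * M"
    unfolding M_def using approx unfolding E_def by (intro weighted_sum_perturbation_le) auto
  finally show ?thesis
    using \<open>\<eta> * M \<le> \<delta> / 4\<close> \<open>\<delta> > 0\<close> by linarith
qed

section \<open>Complete monotonicity of exp (- s * u powr p)\<close>

(* Differentiating exp (- s * u powr p) * u powr (k * p - n) produces the two terms of the recursion. *)
primrec exp_powr_coeff :: "real \<Rightarrow> real \<Rightarrow> nat \<Rightarrow> nat \<Rightarrow> real" where
  "exp_powr_coeff s p 0 k = of_bool (k = 0)"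
| "exp_powr_coeff s p (Suc n) k =
     (if k = 0 then 0 else exp_powr_coeff s p n (k - 1) * (s * p))
     + exp_powr_coeff s p n k * (real n - real k * p)"

definition exp_powr_deriv :: "real \<Rightarrow> real \<Rightarrow> nat \<Rightarrow> real \<Rightarrow> real" where
  "exp_powr_deriv s p n u =
     (-1) ^ n * exp (- s * u powr p) * (\<Sum>k\<le>n. exp_powr_coeff s p n k * u powr (real k * p - real n))"

lemma exp_powr_coeff_eq_0: "n < k \<Longrightarrow> exp_powr_coeff s p n k = 0"
  by (induction n arbitrary: k) auto

lemma exp_powr_coeff_nonneg:
  assumes "s > 0" "0 < p" "p \<le> 1"
  shows "exp_powr_coeff s p n k \<ge> 0"
proof (induction n arbitrary: k)
  case (Suc n)
  have "exp_powr_coeff s p n k * (real n - real k * p) \<ge> 0"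
  proof (cases "k \<le> n")
    case True
    have "real k * p \<le> real n" using assms True mult_left_le[of p "real k"] by linarith
    then show ?thesis using Suc.IH[of k] by simp
  qed (simp add: exp_powr_coeff_eq_0)
  then show ?case using Suc.IH[of "k - 1"] assms by simp
qed simp

lemma exp_powr_deriv_has_derivative:
  assumes "u > 0"
  shows "(exp_powr_deriv s p n has_real_derivative exp_powr_deriv s p (Suc n) u) (at u)"
proof -
  define E where "E = exp (- s * u powr p)"
  define D where "D = (-1) ^ n * (E * (- s * (p * u powr (p - 1)))
      * (\<Sum>k\<le>n. exp_powr_coeff s p n k * u powr (real k * p - real n))
      + E * (\<Sum>k\<le>n. exp_powr_coeff s p n k * ((real k * p - real n) * u powr (real k * p - real n - 1))))"
  have "(exp_powr_deriv s p n has_real_derivative D) (at u)"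
    unfolding exp_powr_deriv_def[abs_def] D_def E_def using assms
    by (auto intro!: derivative_eq_intros simp: algebra_simps)
  moreover have "exp_powr_deriv s p (Suc n) u = D"
  proof -
    have pow: "u powr (p - 1) * u powr (real k * p - real n) = u powr (real (Suc k) * p - real (Suc n))"
      for k
      using assms by (simp add: powr_add[symmetric] algebra_simps)
    have shift: "(\<Sum>k\<le>Suc n. (if k = 0 then 0 else exp_powr_coeff s p n (k - 1) * (s * p))
                    * u powr (real k * p - real (Suc n)))
          = (\<Sum>k\<le>n. exp_powr_coeff s p n k * (s * p) * (u powr (p - 1) * u powr (real k * p - real n)))"
      by (subst sum.atMost_Suc_shift) (simp add: pow)
    have top: "(\<Sum>k\<le>Suc n. exp_powr_coeff s p n k * (real n - real k * p) * u powr (real k * p - real (Suc n)))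
          = (\<Sum>k\<le>n. exp_powr_coeff s p n k * (real n - real k * p) * u powr (real k * p - real n - 1))"
      by (simp add: exp_powr_coeff_eq_0 diff_diff_eq add.commute)
    have "exp_powr_deriv s p (Suc n) u = (-1) ^ Suc n * E *
        ((\<Sum>k\<le>Suc n. (if k = 0 then 0 else exp_powr_coeff s p n (k - 1) * (s * p))
                     * u powr (real k * p - real (Suc n)))
         + (\<Sum>k\<le>Suc n. exp_powr_coeff s p n k * (real n - real k * p) * u powr (real k * p - real (Suc n))))"
      by (simp add: exp_powr_deriv_def E_def sum.distrib distrib_right)
    also have "\<dots> = D"
      unfolding shift top D_def
      by (simp add: sum_distrib_left sum_distrib_right sum_negf[symmetric] algebra_simps)
    finally show ?thesis .
  qed
  ultimately show ?thesis by simp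
qed

lemma deriv_iter_exp_powr:
  "u > 0 \<Longrightarrow> (deriv ^^ n) (\<lambda>u. exp (- s * u powr p)) u = exp_powr_deriv s p n u"
proof (induction n arbitrary: u)
  case 0
  then show ?case by (simp add: exp_powr_deriv_def)
next
  case (Suc n)
  have "((deriv ^^ n) (\<lambda>u. exp (- s * u powr p)) has_real_derivative exp_powr_deriv s p (Suc n) u) (at u)"
    by (rule has_field_derivative_transform_within_open[OF exp_powr_deriv_has_derivative[OF Suc.prems],
        of "{0<..}"]) (use Suc in auto)
  then show ?case by (simp add: DERIV_imp_deriv)
qed

lemma completely_monotone_exp_powr:
  assumes "s > 0" "0 < p" "p \<le> 1"
  shows "completely_monotone (\<lambda>u. exp (- s * u powr p))"
  unfolding completely_monotone_def
proof (intro conjI allI impI)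
  fix n :: nat and x :: real
  assume "x > 0"
  have "((deriv ^^ n) (\<lambda>u. exp (- s * u powr p)) has_real_derivative exp_powr_deriv s p (Suc n) x) (at x)"
    by (rule has_field_derivative_transform_within_open[OF exp_powr_deriv_has_derivative[OF \<open>x > 0\<close>],
        of "{0<..}"]) (use \<open>x > 0\<close> deriv_iter_exp_powr in auto)
  then show "(deriv ^^ n) (\<lambda>u. exp (- s * u powr p)) differentiable at x"
    using real_differentiable_def by blast
  have "(-1) ^ n * (deriv ^^ n) (\<lambda>u. exp (- s * u powr p)) x
          = exp (- s * x powr p) * (\<Sum>k\<le>n. exp_powr_coeff s p n k * x powr (real k * p - real n))"
    using deriv_iter_exp_powr[OF \<open>x > 0\<close>] by (simp add: exp_powr_deriv_def power_mult_distrib[symmetric])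
  also have "\<dots> \<ge> 0"
    using exp_powr_coeff_nonneg[OF assms] by (intro mult_nonneg_nonneg sum_nonneg) auto
  finally show "(-1) ^ n * (deriv ^^ n) (\<lambda>u. exp (- s * u powr p)) x \<ge> 0" .
next
  have "((\<lambda>u. u powr p) \<longlongrightarrow> 0) (at_right 0)"
    using assms by (intro tendsto_zero_powrI[of _ _ _ p] tendsto_intros eventually_at_rightI[of 0 1]) auto
  from tendsto_exp[OF tendsto_mult[OF tendsto_const this, of "- s"]]
  show "((\<lambda>u. exp (- s * u powr p)) \<longlongrightarrow> exp (- s * 0 powr p)) (at_right 0)" by simp
qed

lemma exp_powr_tendsto_0:
  fixes s p :: real
  assumes "s > 0" "p > 0"
  shows "((\<lambda>u. exp (- s * u powr p)) \<longlongrightarrow> 0) at_top"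
proof -
  have "filterlim (\<lambda>u. u powr p) at_top at_top"
  proof (rule filterlim_cong[THEN iffD2, OF refl refl _ filterlim_compose[OF exp_at_top]])
    show "\<forall>\<^sub>F x in at_top. x powr p = exp (p * ln x)"
      using eventually_gt_at_top[of 0] by eventually_elim (simp add: powr_def)
    show "filterlim (\<lambda>x. p * ln x) at_top at_top"
      using assms by (intro filterlim_tendsto_pos_mult_at_top[OF tendsto_const _ ln_at_top])
  qed
  then have "filterlim (\<lambda>u. - s * u powr p) at_bot at_top"
    using assms by (intro filterlim_tendsto_neg_mult_at_bot[OF tendsto_const]) auto
  then show ?thesis by (rule filterlim_compose[OF exp_at_bot])
qed

section \<open>Quadratic forms and the Laplace product kernel\<close>

definition quad_form :: "nat \<Rightarrow> (nat \<Rightarrow> complex) \<Rightarrow> (nat \<Rightarrow> nat \<Rightarrow> real) \<Rightarrow> real" where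
  "quad_form k c K = (\<Sum>l<k. \<Sum>l'<k. Re (cnj (c l) * c l') * K l l')"

lemma quad_form_cong:
  "(\<And>l l'. l < k \<Longrightarrow> l' < k \<Longrightarrow> K l l' = K' l l') \<Longrightarrow> quad_form k c K = quad_form k c K'"
  unfolding quad_form_def by (intro sum.cong refl) auto

lemma quad_form_eq_sum_pairs:
  "quad_form k c K = (\<Sum>z\<in>{..<k} \<times> {..<k}. Re (cnj (c (fst z)) * c (snd z)) * K (fst z) (snd z))"
  unfolding quad_form_def by (simp add: sum.cartesian_product case_prod_beta)

lemma quad_form_rank_one:
  "quad_form k c (\<lambda>l l'. v l * v l') = (cmod (\<Sum>l<k. of_real (v l) * c l))\<^sup>2"
proof -
  define S where "S = (\<Sum>l<k. of_real (v l) * c l)"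
  have "complex_of_real ((cmod S)\<^sup>2) = cnj S * S"
    by (metis complex_norm_square mult.commute)
  also have "\<dots> = (\<Sum>l<k. \<Sum>l'<k. cnj (of_real (v l) * c l) * (of_real (v l') * c l'))"
    unfolding S_def by (simp add: sum_product cnj_sum)
  finally have "(cmod S)\<^sup>2 = Re (\<Sum>l<k. \<Sum>l'<k. cnj (of_real (v l) * c l) * (of_real (v l') * c l'))"
    by (metis Re_complex_of_real)
  then show ?thesis
    by (simp add: S_def quad_form_def Re_sum algebra_simps)
qed

lemma quad_form_pos_rank_one_sum:
  assumes "finite G" "\<And>g. g \<in> G \<Longrightarrow> W g \<ge> 0" "g0 \<in> G" "W g0 > 0"
    and "(\<Sum>l<k. of_real (v g0 l) * c l) \<noteq> 0"
  shows "quad_form k c (\<lambda>l l'. \<Sum>g\<in>G. W g * (v g l * v g l')) > 0"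
proof -
  have "quad_form k c (\<lambda>l l'. \<Sum>g\<in>G. W g * (v g l * v g l'))
          = (\<Sum>g\<in>G. W g * quad_form k c (\<lambda>l l'. v g l * v g l'))"
    unfolding quad_form_def
    by (simp add: sum_distrib_left sum_distrib_right sum.swap[of _ G] mult_ac)
  also have "\<dots> = (\<Sum>g\<in>G. W g * (cmod (\<Sum>l<k. of_real (v g l) * c l))\<^sup>2)"
    by (simp add: quad_form_rank_one)
  also have "\<dots> \<ge> W g0 * (cmod (\<Sum>l<k. of_real (v g0 l) * c l))\<^sup>2"
    using assms by (intro member_le_sum) auto
  moreover have "W g0 * (cmod (\<Sum>l<k. of_real (v g0 l) * c l))\<^sup>2 > 0"
    using assms by simp
  ultimately show ?thesis by linarith
qed

lemma strict_mono_eq_cumulative_sum: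
  fixes h :: "real \<Rightarrow> real"
  assumes "finite T" "strict_mono h" "\<And>x. h x > 0"
  obtains w where "\<And>\<tau>. \<tau> \<in> T \<Longrightarrow> w \<tau> > 0"
    and "\<And>x. x \<in> T \<Longrightarrow> (\<Sum>\<tau>\<in>{\<tau>\<in>T. \<tau> \<le> x}. w \<tau>) = h x"
proof -
  have "\<exists>w. (\<forall>\<tau>\<in>T. w \<tau> > 0) \<and> (\<forall>x\<in>T. (\<Sum>\<tau>\<in>{\<tau>\<in>T. \<tau> \<le> x}. w \<tau>) = h x)"
    using \<open>finite T\<close>
  proof (induction T rule: finite_linorder_max_induct)
    case (insert b A)
    then obtain w where w_pos: "\<forall>\<tau>\<in>A. w \<tau> > 0"
      and w_sum: "\<forall>x\<in>A. (\<Sum>\<tau>\<in>{\<tau>\<in>A. \<tau> \<le> x}. w \<tau>) = h x"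
      by blast
    have "b \<notin> A" using insert.hyps(2) by auto
    define h0 where "h0 = (if A = {} then 0 else h (Max A))"
    have "h0 < h b"
      using assms(3) insert.hyps \<open>strict_mono h\<close> by (auto simp: h0_def strict_mono_def)
    have "(\<Sum>\<tau>\<in>A. w \<tau>) = h0"
    proof (cases "A = {}")
      case False
      then have "{\<tau>\<in>A. \<tau> \<le> Max A} = A" using insert.hyps(1) by auto
      then show ?thesis using w_sum False insert.hyps(1) by (metis Max_in h0_def)
    qed (simp add: h0_def)
    define w' where "w' = w(b := h b - h0)"
    have "\<forall>\<tau>\<in>insert b A. w' \<tau> > 0"
      using w_pos \<open>h0 < h b\<close> \<open>b \<notin> A\<close> by (auto simp: w'_def)
    moreover have "(\<Sum>\<tau>\<in>{\<tau>\<in>insert b A. \<tau> \<le> x}. w' \<tau>) = h x" if "x \<in> insert b A" for x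
    proof (cases "x = b")
      case True
      then have "{\<tau>\<in>insert b A. \<tau> \<le> x} = insert b A" using insert.hyps(2) by auto
      moreover have "(\<Sum>\<tau>\<in>A. w' \<tau>) = (\<Sum>\<tau>\<in>A. w \<tau>)"
        using \<open>b \<notin> A\<close> by (intro sum.cong) (auto simp: w'_def)
      ultimately show ?thesis
        using True insert.hyps(1) \<open>b \<notin> A\<close> \<open>(\<Sum>\<tau>\<in>A. w \<tau>) = h0\<close> by (simp add: w'_def)
    next
      case False
      then have "x \<in> A" using that by simp
      then have "{\<tau>\<in>insert b A. \<tau> \<le> x} = {\<tau>\<in>A. \<tau> \<le> x}" using insert.hyps(2) by force
      moreover have "(\<Sum>\<tau>\<in>{\<tau>\<in>A. \<tau> \<le> x}. w' \<tau>) = (\<Sum>\<tau>\<in>{\<tau>\<in>A. \<tau> \<le> x}. w \<tau>)"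
        using \<open>b \<notin> A\<close> by (intro sum.cong) (auto simp: w'_def)
      ultimately show ?thesis using w_sum \<open>x \<in> A\<close> by simp
    qed
    ultimately show ?case by blast
  qed simp
  then show ?thesis using that by blast
qed

lemma prod_of_bool: "finite A \<Longrightarrow> (\<Prod>x\<in>A. of_bool (P x) :: 'b :: comm_semiring_1) = of_bool (\<forall>x\<in>A. P x)"
  by (induction A rule: finite_induct) auto

text \<open>exp (- r |y - x|) = e^(-r x) e^(-r y) e^(2 r min x y), and the increasing function e^(2 r z) is a
  cumulative sum of positive weights over the finitely many coordinate values that occur; so the Laplace
  product kernel is a positive combination of products of orthant indicators.\<close>
lemma laplace_product_kernel_eq_sum:
  fixes x y :: "real ^ 'D" and T :: "'D \<Rightarrow> real set"
  assumes "\<And>d. finite (T d)" "\<And>d. x $ d \<in> T d" "\<And>d. y $ d \<in> T d"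
    and w: "\<And>d z. z \<in> T d \<Longrightarrow> (\<Sum>\<tau>\<in>{\<tau>\<in>T d. \<tau> \<le> z}. w d \<tau>) = exp (2 * r d * z)"
  defines "\<alpha> v \<equiv> (\<Prod>d\<in>UNIV. exp (- r d * v $ d))"
  shows "(\<Prod>d\<in>UNIV. exp (- r d * \<bar>y $ d - x $ d\<bar>))
           = (\<Sum>g\<in>PiE UNIV T. (\<Prod>d\<in>UNIV. w d (g d))
                * ((\<alpha> x * of_bool (\<forall>d. g d \<le> x $ d)) * (\<alpha> y * of_bool (\<forall>d. g d \<le> y $ d))))"
proof -
  have coord: "exp (- r d * \<bar>y $ d - x $ d\<bar>) = exp (- r d * x $ d) * exp (- r d * y $ d)
                 * (\<Sum>\<tau>\<in>T d. w d \<tau> * (of_bool (\<tau> \<le> x $ d) * of_bool (\<tau> \<le> y $ d)))" for d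
  proof -
    have "exp (- r d * \<bar>y $ d - x $ d\<bar>)
            = exp (- r d * x $ d) * exp (- r d * y $ d) * exp (2 * r d * min (x $ d) (y $ d))"
      by (simp add: exp_add[symmetric] min_def abs_if algebra_simps)
    also have "exp (2 * r d * min (x $ d) (y $ d)) = (\<Sum>\<tau>\<in>{\<tau>\<in>T d. \<tau> \<le> min (x $ d) (y $ d)}. w d \<tau>)"
      using w[of "min (x $ d) (y $ d)" d] assms(2,3) by (simp add: min_def)
    also have "\<dots> = (\<Sum>\<tau>\<in>T d. if \<tau> \<le> min (x $ d) (y $ d) then w d \<tau> else 0)"
      by (rule sum.inter_filter[OF assms(1)])
    also have "\<dots> = (\<Sum>\<tau>\<in>T d. w d \<tau> * (of_bool (\<tau> \<le> x $ d) * of_bool (\<tau> \<le> y $ d)))"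
      by (intro sum.cong) auto
    finally show ?thesis .
  qed
  have "(\<Prod>d\<in>UNIV. exp (- r d * \<bar>y $ d - x $ d\<bar>))
          = \<alpha> x * \<alpha> y * (\<Prod>d\<in>UNIV. \<Sum>\<tau>\<in>T d. w d \<tau> * (of_bool (\<tau> \<le> x $ d) * of_bool (\<tau> \<le> y $ d)))"
    unfolding coord \<alpha>_def by (simp add: prod.distrib)
  also have "(\<Prod>d\<in>UNIV. \<Sum>\<tau>\<in>T d. w d \<tau> * (of_bool (\<tau> \<le> x $ d) * of_bool (\<tau> \<le> y $ d)))
      = (\<Sum>g\<in>PiE UNIV T. \<Prod>d\<in>UNIV. w d (g d) * (of_bool (g d \<le> x $ d) * of_bool (g d \<le> y $ d)))"
    using assms(1) by (intro prod_sum_PiE) auto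
  also have "\<dots> = (\<Sum>g\<in>PiE UNIV T. (\<Prod>d\<in>UNIV. w d (g d))
                      * (of_bool (\<forall>d. g d \<le> x $ d) * of_bool (\<forall>d. g d \<le> y $ d)))"
    by (simp add: prod.distrib prod_of_bool)
  finally show ?thesis
    by (simp add: sum_distrib_left mult_ac)
qed

lemma laplace_product_kernel_pos:
  fixes \<theta> :: "nat \<Rightarrow> real ^ 'D" and r :: "'D \<Rightarrow> real" and c :: "nat \<Rightarrow> complex"
  assumes r_pos: "\<And>d. r d > 0" and inj: "inj_on \<theta> {..<k}" and "\<exists>l<k. c l \<noteq> 0"
  shows "quad_form k c (\<lambda>l l'. \<Prod>d\<in>UNIV. exp (- r d * \<bar>\<theta> l' $ d - \<theta> l $ d\<bar>)) > 0"
proof -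
  define T where "T d = (\<lambda>l. \<theta> l $ d) ` {..<k}" for d
  have T_finite: "finite (T d)" for d by (simp add: T_def)
  have "\<exists>w. (\<forall>\<tau>\<in>T d. w \<tau> > 0) \<and> (\<forall>z\<in>T d. (\<Sum>\<tau>\<in>{\<tau>\<in>T d. \<tau> \<le> z}. w \<tau>) = exp (2 * r d * z))"
    for d
  proof -
    have "strict_mono (\<lambda>z. exp (2 * r d * z))"
      using r_pos[of d] by (intro strict_monoI) simp
    from strict_mono_eq_cumulative_sum[OF T_finite this] show ?thesis by (metis exp_gt_zero)
  qed
  then obtain w where w_pos: "\<And>d \<tau>. \<tau> \<in> T d \<Longrightarrow> w d \<tau> > 0"
    and w_sum: "\<And>d z. z \<in> T d \<Longrightarrow> (\<Sum>\<tau>\<in>{\<tau>\<in>T d. \<tau> \<le> z}. w d \<tau>) = exp (2 * r d * z)"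
    by metis
  define G where "G = PiE UNIV T"
  have "finite G" unfolding G_def using T_finite by (intro finite_PiE) auto
  define W where "W g = (\<Prod>d\<in>UNIV. w d (g d))" for g
  define v where "v g l = (\<Prod>d\<in>UNIV. exp (- r d * \<theta> l $ d)) * of_bool (\<forall>d. g d \<le> \<theta> l $ d)" for g l
  have "quad_form k c (\<lambda>l l'. \<Prod>d\<in>UNIV. exp (- r d * \<bar>\<theta> l' $ d - \<theta> l $ d\<bar>))
          = quad_form k c (\<lambda>l l'. \<Sum>g\<in>G. W g * (v g l * v g l'))"
    unfolding G_def W_def v_def
    by (intro quad_form_cong laplace_product_kernel_eq_sum T_finite w_sum) (auto simp: T_def)
  also have "\<dots> > 0"
  proof -
    define L where "L = {l. l < k \<and> c l \<noteq> 0}"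
    have "finite (\<theta> ` L)" "\<theta> ` L \<noteq> {}" using assms by (auto simp: L_def)
    from finite_has_maximal[OF this] obtain l0 where "l0 \<in> L"
      and l0_max: "\<And>l. l \<in> L \<Longrightarrow> \<theta> l0 \<le> \<theta> l \<Longrightarrow> \<theta> l0 = \<theta> l"
      by auto
    define g0 where "g0 d = \<theta> l0 $ d" for d
    have "of_real (v g0 l) * c l = 0" if "l \<in> {..<k} - {l0}" for l :: nat
    proof (cases "l \<in> L")
      case True
      then have "\<not> \<theta> l0 \<le> \<theta> l"
        using l0_max inj \<open>l0 \<in> L\<close> that by (auto simp: L_def inj_on_def)
      then show ?thesis by (simp add: v_def g0_def less_eq_vec_def)
    qed (use that in \<open>simp add: L_def\<close>)
    then have "(\<Sum>l<k. of_real (v g0 l) * c l) = of_real (v g0 l0) * c l0"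
      using \<open>l0 \<in> L\<close> by (subst sum.remove[of _ l0]) (auto simp: L_def sum.neutral)
    also have "\<dots> \<noteq> 0"
      using \<open>l0 \<in> L\<close> by (simp add: v_def g0_def L_def)
    finally show ?thesis
      using w_pos \<open>l0 \<in> L\<close> \<open>finite G\<close>
      by (intro quad_form_pos_rank_one_sum[of G W g0])
         (auto simp: G_def W_def g0_def T_def L_def prod_pos less_imp_le PiE_iff intro!: prod_nonneg)
  qed
  finally show ?thesis .
qed

section \<open>Strict positive definiteness\<close>

lemma quad_form_pos_completely_monotone:
  fixes \<phi> :: "real \<Rightarrow> real" and u R :: "nat \<Rightarrow> nat \<Rightarrow> real"
  assumes "completely_monotone \<phi>" "\<phi> 0 = 1" "(\<phi> \<longlongrightarrow> 0) at_top"
    and "\<And>l l'. l < k \<Longrightarrow> l' < k \<Longrightarrow> u l l' \<ge> 0"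
    and "\<And>\<rho>. \<rho> > 0 \<Longrightarrow> quad_form k c (\<lambda>l l'. exp (- \<rho> * u l l') * R l l') > 0"
  shows "quad_form k c (\<lambda>l l'. \<phi> (u l l') * R l l') > 0"
proof -
  define W where "W z = Re (cnj (c (fst z)) * c (snd z)) * R (fst z) (snd z)" for z
  have "(\<Sum>z\<in>{..<k} \<times> {..<k}. W z * \<phi> (u (fst z) (snd z))) > 0"
    using assms(5) unfolding quad_form_eq_sum_pairs
    by (intro completely_monotone_sum_pos[OF assms(1-3)]) (auto simp: W_def mult_ac assms(4))
  then show ?thesis
    unfolding quad_form_eq_sum_pairs by (simp add: W_def mult_ac)
qed

lemma exp_pnorm_pow_kernel_pos:
  fixes \<theta> :: "nat \<Rightarrow> real ^ 'D" and c :: "nat \<Rightarrow> complex"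
  assumes "s > 0" "0 < p" "p \<le> 1" "inj_on \<theta> {..<k}" "\<exists>l<k. c l \<noteq> 0"
  shows "quad_form k c (\<lambda>l l'. exp (- s * pnorm_pow p (\<theta> l' - \<theta> l))) > 0"
proof -
  define K where "K S r l l' = (\<Prod>d\<in>UNIV. if d \<in> S then exp (- s * \<bar>\<theta> l' $ d - \<theta> l $ d\<bar> powr p)
                                  else exp (- r d * \<bar>\<theta> l' $ d - \<theta> l $ d\<bar>))"
    for S r l l'
  have "finite S \<Longrightarrow> (\<forall>d. r d > 0) \<Longrightarrow> quad_form k c (K S r) > 0" for S r
  proof (induction S arbitrary: r rule: finite_induct)
    case empty
    then show ?case
      using laplace_product_kernel_pos[OF _ assms(4,5)] by (simp add: K_def)
  next
    case (insert d0 S)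
    define R where "R l l' = (\<Prod>d\<in>UNIV - {d0}. if d \<in> S then exp (- s * \<bar>\<theta> l' $ d - \<theta> l $ d\<bar> powr p)
                                                 else exp (- r d * \<bar>\<theta> l' $ d - \<theta> l $ d\<bar>))" for l l'
    define u where "u l l' = \<bar>\<theta> l' $ d0 - \<theta> l $ d0\<bar>" for l l'
    have K_laplace: "K S (r(d0 := \<rho>)) = (\<lambda>l l'. exp (- \<rho> * u l l') * R l l')" for \<rho>
    proof (intro ext)
      fix l l'
      have "(\<Prod>d\<in>UNIV - {d0}. if d \<in> S then exp (- s * \<bar>\<theta> l' $ d - \<theta> l $ d\<bar> powr p)
                               else exp (- (r(d0 := \<rho>)) d * \<bar>\<theta> l' $ d - \<theta> l $ d\<bar>)) = R l l'"
        unfolding R_def by (intro prod.cong) auto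
      then show "K S (r(d0 := \<rho>)) l l' = exp (- \<rho> * u l l') * R l l'"
        using insert.hyps(2) unfolding K_def u_def by (subst prod.remove[of _ d0]) auto
    qed
    have K_stable: "K (insert d0 S) r = (\<lambda>l l'. exp (- s * u l l' powr p) * R l l')"
      unfolding K_def R_def u_def by (intro ext, subst prod.remove[of _ d0]) (auto intro!: prod.cong)
    have laplace_pos: "quad_form k c (\<lambda>l l'. exp (- \<rho> * u l l') * R l l') > 0" if "\<rho> > 0" for \<rho>
      using insert.IH[of "r(d0 := \<rho>)"] insert.prems that unfolding K_laplace by simp
    have "quad_form k c (\<lambda>l l'. (\<lambda>u. exp (- s * u powr p)) (u l l') * R l l') > 0"
      by (rule quad_form_pos_completely_monotone[OF completely_monotone_exp_powr[OF assms(1-3)] _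
            exp_powr_tendsto_0[OF assms(1,2)] _ laplace_pos]) (simp_all add: u_def)
    then show ?case unfolding K_stable by simp
  qed
  from this[of UNIV "\<lambda>_. 1"] show ?thesis
    by (simp add: K_def[abs_def] pnorm_pow_def sum_distrib_left exp_sum)
qed

lemma hermitian_form_eq_quad_form:
  fixes K :: "nat \<Rightarrow> nat \<Rightarrow> real"
  assumes "\<And>l l'. K l l' = K l' l"
  shows "(\<Sum>l<k. \<Sum>l'<k. cnj (c l) * c l' * complex_of_real (K l l')) = complex_of_real (quad_form k c K)"
proof -
  define S where "S = (\<Sum>l<k. \<Sum>l'<k. cnj (c l) * c l' * complex_of_real (K l l'))"
  have "cnj S = (\<Sum>l<k. \<Sum>l'<k. cnj (c l') * c l * complex_of_real (K l' l))"
    unfolding S_def cnj_sum by (intro sum.cong refl) (auto simp: mult_ac intro: assms)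
  also have "\<dots> = S"
    unfolding S_def by (rule sum.swap)
  finally have "S \<in> \<real>" by (simp add: Reals_cnj_iff)
  moreover have "Re S = quad_form k c K"
    by (simp add: S_def quad_form_def Re_sum)
  ultimately show ?thesis
    unfolding S_def[symmetric] by (metis of_real_Re)
qed

lemma pnorm_pow_minus_commute: "pnorm_pow p (x - y) = pnorm_pow p (y - x)"
  unfolding pnorm_pow_def by (simp add: abs_minus_commute)

theorem mainTheorem4:
  fixes \<phi> :: "real \<Rightarrow> real" and p :: real and k :: nat
    and \<theta> :: "nat \<Rightarrow> real ^ 'D" and c :: "nat \<Rightarrow> complex"
  assumes "completely_monotone \<phi>"
    and "\<phi> 0 = 1"
    and "(\<phi> \<longlongrightarrow> 0) at_top"
    and "0 < p" and "p \<le> 1"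
    and "k \<ge> 1"
    and "inj_on \<theta> {..<k}"
    and "\<exists>l<k. c l \<noteq> 0"
  shows "(\<Sum>l<k. \<Sum>l'<k. cnj (c l) * c l' * complex_of_real (\<phi> (pnorm_pow p (\<theta> l' - \<theta> l)))) > 0"
proof -
  have "quad_form k c (\<lambda>l l'. \<phi> (pnorm_pow p (\<theta> l' - \<theta> l)) * 1) > 0"
    using exp_pnorm_pow_kernel_pos[OF _ assms(4,5,7,8)]
    by (intro quad_form_pos_completely_monotone[OF assms(1-3)]) (auto simp: pnorm_pow_def intro: sum_nonneg)
  then show ?thesis
    using hermitian_form_eq_quad_form[of "\<lambda>l l'. \<phi> (pnorm_pow p (\<theta> l' - \<theta> l))"]
    by (simp add: pnorm_pow_minus_commute less_complex_def)
qed

end
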